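(* Assume the generic setting and Conditions (C1) and (C2) below, with step sizes $\alpha_t = a/(u+t)^\gamma$ for some $a>0$, $u>0$ and $\gamma\in[0,1]$. Then there exist constants $I,J,K>0$, independent of $t$ and $z$, such that for all $t\ge 0$ and all $z\ge 0$, $$\mathbb P\big(f(x_{t+1})-f(x^\star)\ge z\big)\le I\,e^{-\frac{J}{\alpha_t}z} \qquad\text{and}\qquad \mathbb E\big[f(x_{t+1})-f(x^\star)\big]\le K\alpha_t .$$ The constants may depend on $a,u,\gamma,\kappa,B,\lambda$, the law of $Y$, and $F$.
   Context: Generic setting. $\mathcal X\subseteq\mathbb R^d$ is a nonempty closed bounded convex set and $f:\mathcal X\to\mathbb R$ is continuous. $x^\star$ is a minimizer of $f$ on $\mathcal X$, and $F:=\max_{\mathcal X}f-\min_{\mathcal X}f$. On a probability space with filtration $(\mathcal F_t)_{t\ge0}$, $(x_t)_{t\ge0}$ is an $\mathcal X$-valued process adapted to $(\mathcal F_t)$. $(\alpha_t)_{t\ge0}$ is a deterministic sequence of positive step sizes. Condition (C1): there exist $\kappa>0$ and $B>0$ such that for every $t\ge0$, almost surely on the event $\{f(x_t)-f(x^\star)\ge \alpha_t B\}$, $$\mathbb E[f(x_{t+1})-f(x_t)\mid\mathcal F_t]\le -2\alpha_t\kappa.$$ Condition (C2): there exist $\lambda>0$ and a nonnegative random variable $Y$ with $\mathbb E[e^{\lambda Y}]<\infty$ such that for every $t\ge0$ and every $y\ge0$, almost surely $$\mathbb P\big(|f(x_{t+1})-f(x_t)|\ge \alpha_t y\mid\mathcal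 F_t\big)\le \mathbb P(Y\ge y).$$ *)

theory Defs
  imports "HOL-Probability.Probability"
begin

end

theory Submission
  imports Defs
begin

text \<open>
  Write \<open>D t = f (x t) - f x\<^sup>\<star>\<close>, let \<open>\<phi> d = c (exp (d / c) - 1)\<close> with \<open>c = a \<kappa> / 2\<close>, and
  consider the Lyapunov function \<open>V t = exp (\<eta> \<phi> (D t) / \<alpha> t)\<close>. Above the threshold
  \<open>D t \<ge> \<alpha> t B\<close>, a second-order expansion of \<open>exp\<close> bounds \<open>V (t + 1)\<close> by \<open>V t\<close> times a
  factor that is linear in the increment \<open>\<Delta> = D (t + 1) - D t\<close> up to a remainder
  \<open>Q exp (\<lambda> |\<Delta>| / \<alpha> t)\<close>. Condition (C1) turns the linear part into a drift
  \<open>-2 \<eta> \<kappa> \<phi>' (D t)\<close>, condition (C2) bounds the conditional exponential moment of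
  \<open>|\<Delta>| / \<alpha> t\<close> by \<open>E exp (\<lambda> Y)\<close>, and the growth \<open>1 / \<alpha> (t + 1) - 1 / \<alpha> t \<le> 1 / a\<close> of the
  inverse step sizes costs only half of the drift. For small \<open>\<eta>\<close> and \<open>\<alpha> t\<close> this gives
  \<open>E V (t + 1) \<le> exp (- \<eta> \<kappa>) E V t + C\<close>, while for large \<open>\<alpha> t\<close> the function
  \<open>V (t + 1)\<close> is bounded outright because \<open>\<alpha> (t + 1)\<close> is large too; hence \<open>E V t\<close> is bounded uniformly in \<open>t\<close>.
  Since \<open>D \<le> \<phi> D\<close> and \<open>\<alpha> (t + 1) \<le> \<alpha> t\<close>, Markov's inequality gives the exponential tail bound
  and \<open>x \<le> exp x\<close> the bound on the mean.
\<close>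

lemma exp_le_one_plus_quadratic: "exp (y::real) \<le> 1 + y + y\<^sup>2 / 2 * exp (max y 0)"
proof (cases "y \<ge> 0")
  case True
  obtain s where s: "\<bar>s\<bar> \<le> \<bar>y\<bar>" "exp y = (\<Sum>m<2. y^m / fact m) + exp s / fact 2 * y\<^sup>2"
    using Maclaurin_exp_le[of y 2] by blast
  have "exp s \<le> exp y" using s(1) True by simp
  then have "exp s / 2 * y\<^sup>2 \<le> y\<^sup>2 / 2 * exp y" by (simp add: mult_right_mono mult.commute)
  then show ?thesis using s True by (simp add: numeral_2_eq_2 max_def)
next
  case False
  obtain s where s: "exp y = (\<Sum>m<3. y^m / fact m) + exp s / fact 3 * y^3"
    using Maclaurin_exp_le[of y 3] by blast
  have "y^3 \<le> 0" using False by (simp add: power3_eq_cube mult_nonneg_nonpos)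
  then have "exp y \<le> 1 + y + y\<^sup>2 / 2"
    using s by (simp add: numeral_3_eq_3 eval_nat_numeral mult_nonneg_nonpos)
  then show ?thesis using False by simp
qed

lemma square_le_exp_abs:
  fixes w lam :: real assumes lam: "lam > 0"
  shows "w\<^sup>2 \<le> 32 / lam\<^sup>2 * exp (lam * \<bar>w\<bar> / 4)"
proof -
  define s where "s = lam * \<bar>w\<bar> / 4"
  have "0 \<le> s" using lam by (simp add: s_def)
  then have "s\<^sup>2 / 2 \<le> exp s"
    using exp_lower_Taylor_quadratic[of s] by simp
  then show ?thesis
    using lam by (simp add: s_def power2_eq_square field_simps)
qed

lemma exp_le_one_plus_exp_abs:
  fixes x w g lam :: real
  assumes lam: "lam > 0" and g: "0 \<le> g" "g \<le> lam / 2" and x: "\<bar>x\<bar> \<le> g * \<bar>w\<bar>"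
  shows "exp x \<le> 1 + x + g\<^sup>2 * (16 / lam\<^sup>2) * exp (lam * \<bar>w\<bar>)"
proof -
  define s where "s = lam * \<bar>w\<bar> / 4"
  have w2: "w\<^sup>2 \<le> 32 / lam\<^sup>2 * exp s"
    unfolding s_def by (rule square_le_exp_abs[OF lam])
  have x2: "x\<^sup>2 \<le> g\<^sup>2 * w\<^sup>2"
    using x abs_le_square_iff[of x "g * \<bar>w\<bar>"] g by (simp add: power_mult_distrib)
  have exp_sum: "exp \<bar>x\<bar> * exp s \<le> exp (lam * \<bar>w\<bar>)"
    using x g mult_right_mono[OF g(2), of "\<bar>w\<bar>"] by (simp add: s_def flip: exp_add)
  have "x\<^sup>2 / 2 * exp \<bar>x\<bar> \<le> g\<^sup>2 * (32 / lam\<^sup>2 * exp s) / 2 * exp \<bar>x\<bar>"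
    using x2 mult_left_mono[OF w2, of "g\<^sup>2"] by (intro mult_right_mono divide_right_mono) auto
  also have "\<dots> = g\<^sup>2 * (16 / lam\<^sup>2) * (exp \<bar>x\<bar> * exp s)" by simp
  also have "\<dots> \<le> g\<^sup>2 * (16 / lam\<^sup>2) * exp (lam * \<bar>w\<bar>)"
    using exp_sum by (intro mult_left_mono) auto
  finally have "x\<^sup>2 / 2 * exp \<bar>x\<bar> \<le> g\<^sup>2 * (16 / lam\<^sup>2) * exp (lam * \<bar>w\<bar>)" .
  moreover have "x\<^sup>2 / 2 * exp (max x 0) \<le> x\<^sup>2 / 2 * exp \<bar>x\<bar>"
    by (intro mult_left_mono) auto
  ultimately show ?thesis using exp_le_one_plus_quadratic[of x] by linarith
qed

lemma powr_add_one_le: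
  fixes x g :: real assumes x: "0 \<le> x" and g: "0 \<le> g" "g \<le> 1"
  shows "(x + 1) powr g \<le> x powr g + 1"
proof (cases "x \<le> 1")
  case True
  have "(x + 1) powr g \<le> (x + 1) powr 1" using x g by (intro powr_mono) auto
  moreover have "x \<le> x powr g"
    using x True g powr_mono'[of g 1 x] by (cases "x = 0") auto
  ultimately show ?thesis using x by simp
next
  case False
  have "x + 1 = x * (1 + 1/x)" using False by (simp add: field_simps)
  then have "(x + 1) powr g = x powr g * (1 + 1/x) powr g"
    using False by (metis powr_mult x divide_nonneg_nonneg zero_le_one add_nonneg_nonneg)
  also have "\<dots> \<le> x powr g * (1 + 1/x)"
    using False g powr_mono[of g 1 "1 + 1/x"] by (intro mult_left_mono) auto
  also have "\<dots> = x powr g + x powr g / x" by (simp add: field_simps)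
  also have "x powr g / x \<le> 1"
    using False g powr_mono[of g 1 x] by simp
  finally show ?thesis by simp
qed

section \<open>The exponential potential\<close>

definition exp_potential :: "real \<Rightarrow> real \<Rightarrow> real" where
  "exp_potential c d = c * (exp (d / c) - 1)"

lemma exp_potential_ge: "c > 0 \<Longrightarrow> d \<le> exp_potential c d"
  unfolding exp_potential_def using exp_ge_add_one_self[of "d / c"] by (simp add: field_simps)

lemma exp_potential_nonneg: "c > 0 \<Longrightarrow> 0 \<le> d \<Longrightarrow> 0 \<le> exp_potential c d"
  using exp_potential_ge[of c d] by linarith

lemma exp_potential_le_exp: "c > 0 \<Longrightarrow> exp_potential c d \<le> c * exp (d / c)"
  unfolding exp_potential_def by simp

lemma exp_potential_le_linear:
  assumes "c > 0" "0 \<le> d" "d \<le> Fb"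
  shows "exp_potential c d \<le> exp (Fb / c) * d"
proof -
  have "exp (d / c) * (1 - d / c) \<le> exp (d / c) * exp (- (d / c))"
    using exp_ge_add_one_self[of "- (d / c)"] by (intro mult_left_mono) auto
  then have "exp_potential c d \<le> exp (d / c) * d"
    unfolding exp_potential_def using assms by (simp add: exp_minus field_simps)
  also have "\<dots> \<le> exp (Fb / c) * d"
    using assms by (intro mult_right_mono) (auto simp: divide_right_mono)
  finally show ?thesis .
qed

lemma exp_potential_diff_le:
  fixes c d d' Fb :: real
  assumes c: "c > 0" and d: "0 \<le> d" "d \<le> Fb" and d': "0 \<le> d'" "d' \<le> Fb"
  shows "exp_potential c d' - exp_potential c d
           \<le> exp (d / c) * (d' - d) + exp (Fb / c) / (2 * c) * (d' - d)\<^sup>2"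
proof -
  define h where "h = (d' - d) / c"
  have "exp (d / c) * exp (max h 0) = exp (max d d' / c)"
    unfolding h_def using c by (auto simp: max_def field_simps simp flip: exp_add)
  also have "\<dots> \<le> exp (Fb / c)" using c d d' by (simp add: divide_right_mono)
  finally have max_le: "exp (d / c) * exp (max h 0) \<le> exp (Fb / c)" .
  have "exp_potential c d' - exp_potential c d = c * exp (d / c) * (exp h - 1)"
    unfolding exp_potential_def h_def using c
    by (simp add: algebra_simps diff_divide_distrib flip: exp_add)
  also have "\<dots> \<le> c * exp (d / c) * (h + h\<^sup>2 / 2 * exp (max h 0))"
    using exp_le_one_plus_quadratic[of h] c by (intro mult_left_mono) auto
  also have "\<dots> = exp (d / c) * (d' - d) + (exp (d / c) * exp (max h 0)) / (2 * c) * (d' - d)\<^sup>2"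
    unfolding h_def using c by (simp add: field_simps power2_eq_square)
  also have "\<dots> \<le> exp (d / c) * (d' - d) + exp (Fb / c) / (2 * c) * (d' - d)\<^sup>2"
    using max_le c by (intro add_left_mono mult_right_mono divide_right_mono) auto
  finally show ?thesis .
qed

lemma exp_potential_rescaled_le:
  fixes a c Fb d d' al al' :: real
  assumes c: "c > 0" and a: "a > 0"
    and d: "0 \<le> d" "d \<le> Fb" and d': "0 \<le> d'" "d' \<le> Fb"
    and al: "al > 0" "al' > 0" and step: "1 / al' - 1 / al \<le> 1 / a"
  shows "exp_potential c d' / al' \<le> exp_potential c d / al + (c / a) * exp (d / c)
           + (al / al') * (exp (d / c) * ((d' - d) / al)
                           + exp (Fb / c) / (2 * c) * al * ((d' - d) / al)\<^sup>2)"
proof -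
  have "exp_potential c d * (1 / al' - 1 / al) \<le> exp_potential c d * (1 / a)"
    using exp_potential_nonneg[OF c d(1)] step by (intro mult_left_mono)
  also have "\<dots> \<le> (c / a) * exp (d / c)"
    using exp_potential_le_exp[OF c, of d] a by (simp add: divide_right_mono)
  finally have "exp_potential c d * (1 / al' - 1 / al) \<le> (c / a) * exp (d / c)" .
  moreover have "(exp_potential c d' - exp_potential c d) / al'
      \<le> (exp (d / c) * (d' - d) + exp (Fb / c) / (2 * c) * (d' - d)\<^sup>2) / al'"
    using exp_potential_diff_le[OF c d d'] al by (intro divide_right_mono) auto
  moreover have "(exp (d / c) * (d' - d) + exp (Fb / c) / (2 * c) * (d' - d)\<^sup>2) / al'
      = (al / al') * (exp (d / c) * ((d' - d) / al) + exp (Fb / c) / (2 * c) * al * ((d' - d) / al)\<^sup>2)"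
    using al c by (simp add: field_simps power2_eq_square)
  moreover have "exp_potential c d' / al' = exp_potential c d / al
      + (exp_potential c d' - exp_potential c d) / al' + exp_potential c d * (1 / al' - 1 / al)"
    using al by (simp add: field_simps)
  ultimately show ?thesis by linarith
qed

lemma abs_linear_plus_quadratic_le:
  fixes e L c al W Fb :: real
  assumes e: "1 \<le> e" "e \<le> L" and c: "c > 0" and al: "al > 0" and alW: "al * \<bar>W\<bar> \<le> Fb"
  shows "\<bar>e * W + L / (2 * c) * al * W\<^sup>2\<bar> \<le> L * (1 + Fb / (2 * c)) * \<bar>W\<bar>"
proof -
  have "\<bar>L / (2 * c) * al * W\<^sup>2\<bar> = L / (2 * c) * (al * \<bar>W\<bar>) * \<bar>W\<bar>"
    using e c al by (simp add: abs_mult power2_eq_square)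
  moreover have "\<bar>e * W\<bar> \<le> L * \<bar>W\<bar>"
    using e by (simp add: abs_mult mult_right_mono)
  ultimately have "\<bar>e * W + L / (2 * c) * al * W\<^sup>2\<bar> \<le> L * \<bar>W\<bar> + L / (2 * c) * (al * \<bar>W\<bar>) * \<bar>W\<bar>"
    using abs_triangle_ineq[of "e * W" "L / (2 * c) * al * W\<^sup>2"] by linarith
  also have "\<dots> \<le> L * (1 + Fb / (2 * c)) * \<bar>W\<bar>"
    using mult_right_mono[OF mult_left_mono[OF alW, of "L / (2 * c)"], of "\<bar>W\<bar>"] e c
    by (simp add: algebra_simps)
  finally show ?thesis .
qed

lemma exp_rescaled_potential_step_le:
  fixes a c lam Fb \<eta> G r0 d d' al al' :: real
  defines "W \<equiv> (d' - d) / al"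
  assumes c: "c > 0" and a: "a > 0" and lam: "lam > 0" and \<eta>: "\<eta> > 0"
    and G: "r0 * exp (Fb / c) * (1 + Fb / (2 * c)) \<le> G" "\<eta> * G \<le> lam / 2"
    and d: "0 \<le> d" "d \<le> Fb" and d': "0 \<le> d'" "d' \<le> Fb"
    and al: "al > 0" "al' > 0" and r: "1 \<le> al / al'" "al / al' \<le> r0"
    and step: "1 / al' - 1 / al \<le> 1 / a"
  shows "exp (\<eta> * exp_potential c d' / al')
    \<le> exp (\<eta> * exp_potential c d / al + \<eta> * (c / a) * exp (d / c))
       * (1 + \<eta> * (al / al') * exp (d / c) * W
          + (\<eta> * r0 * exp (Fb / c) / (2 * c) * al * (32 / lam\<^sup>2) + \<eta>\<^sup>2 * G\<^sup>2 * (16 / lam\<^sup>2))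
            * exp (lam * \<bar>W\<bar>))"
proof -
  define e L r where "e = exp (d / c)" and "L = exp (Fb / c)" and "r = al / al'"
  define q where "q = L / (2 * c) * al * W\<^sup>2"
  define x where "x = \<eta> * r * (e * W + q)"
  have e: "1 \<le> e" "e \<le> L"
    unfolding e_def L_def using c d by (auto simp: divide_right_mono)
  have r0: "1 \<le> r0" using r by linarith
  have alW: "al * \<bar>W\<bar> \<le> Fb"
    unfolding W_def using al d d' by (simp add: abs_divide)
  have "exp_potential c d' / al' \<le> exp_potential c d / al + (c / a) * e + r * (e * W + q)"
    using exp_potential_rescaled_le[OF c a d d' al step] unfolding e_def L_def r_def q_def W_def .
  then have "\<eta> * (exp_potential c d' / al')
      \<le> \<eta> * (exp_potential c d / al + (c / a) * e + r * (e * W + q))"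
    using \<eta> by (intro mult_left_mono) auto
  then have exponent: "\<eta> * exp_potential c d' / al' \<le> \<eta> * exp_potential c d / al + \<eta> * (c / a) * e + x"
    by (simp add: x_def distrib_left mult.assoc)
  have "\<bar>e * W + q\<bar> \<le> L * (1 + Fb / (2 * c)) * \<bar>W\<bar>"
    unfolding q_def by (rule abs_linear_plus_quadratic_le[OF e c al(1) alW])
  then have "\<eta> * r * \<bar>e * W + q\<bar> \<le> \<eta> * r0 * (L * (1 + Fb / (2 * c)) * \<bar>W\<bar>)"
    using \<eta> r e c unfolding r_def by (intro mult_mono mult_left_mono) auto
  moreover have "\<bar>x\<bar> = \<eta> * r * \<bar>e * W + q\<bar>"
    unfolding x_def r_def using \<eta> al by (simp add: abs_mult)
  ultimately have "\<bar>x\<bar> \<le> \<eta> * (r0 * L * (1 + Fb / (2 * c))) * \<bar>W\<bar>"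
    by (simp add: mult_ac)
  also have "\<dots> \<le> \<eta> * G * \<bar>W\<bar>"
    using G \<eta> unfolding L_def by (intro mult_right_mono mult_left_mono) auto
  finally have x_abs: "\<bar>x\<bar> \<le> \<eta> * G * \<bar>W\<bar>" .
  have "1 * 1 * 1 \<le> r0 * L * (1 + Fb / (2 * c))"
    using r e c d by (intro mult_mono) auto
  then have exp_x: "exp x \<le> 1 + x + (\<eta> * G)\<^sup>2 * (16 / lam\<^sup>2) * exp (lam * \<bar>W\<bar>)"
    using exp_le_one_plus_exp_abs[OF lam _ G(2) x_abs] G(1) \<eta> unfolding L_def by simp
  have "W\<^sup>2 \<le> 32 / lam\<^sup>2 * exp (lam * \<bar>W\<bar> / 4)"
    by (rule square_le_exp_abs[OF lam])
  also have "\<dots> \<le> 32 / lam\<^sup>2 * exp (lam * \<bar>W\<bar>)"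
    using lam by (intro mult_left_mono) auto
  finally have "(\<eta> * r) * (L / (2 * c) * al) * W\<^sup>2
      \<le> (\<eta> * r0) * (L / (2 * c) * al) * (32 / lam\<^sup>2 * exp (lam * \<bar>W\<bar>))"
    using \<eta> c al r e r0 unfolding r_def by (intro mult_mono) auto
  then have quad: "\<eta> * r * q \<le> \<eta> * r0 * L / (2 * c) * al * (32 / lam\<^sup>2) * exp (lam * \<bar>W\<bar>)"
    by (simp add: q_def mult_ac)
  have "x = \<eta> * r * e * W + \<eta> * r * q"
    by (simp add: x_def algebra_simps)
  then have "exp x \<le> 1 + \<eta> * r * e * W
      + (\<eta> * r0 * L / (2 * c) * al * (32 / lam\<^sup>2) + \<eta>\<^sup>2 * G\<^sup>2 * (16 / lam\<^sup>2)) * exp (lam * \<bar>W\<bar>)"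
    using exp_x quad by (simp add: distrib_right power_mult_distrib)
  moreover have "exp (\<eta> * exp_potential c d' / al')
      \<le> exp (\<eta> * exp_potential c d / al + \<eta> * (c / a) * e) * exp x"
    using exponent by (simp flip: exp_add)
  ultimately show ?thesis
    unfolding e_def L_def r_def by (meson exp_ge_zero mult_left_mono order.trans)
qed

lemma exp_rescaled_potential_below_le:
  fixes c Fb \<eta> d d' al al' r0 B :: real
  assumes c: "c > 0" and \<eta>: "\<eta> > 0"
    and d: "0 \<le> d" and d': "0 \<le> d'" "d' \<le> Fb"
    and al: "al > 0" "al' > 0" and r: "al / al' \<le> r0" and below: "d < al * B"
  shows "exp (\<eta> * exp_potential c d' / al')
           \<le> exp (\<eta> * r0 * exp (Fb / c) * B) * exp (\<eta> * r0 * exp (Fb / c) * \<bar>(d' - d) / al\<bar>)"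
proof -
  define L W where "L = exp (Fb / c)" and "W = (d' - d) / al"
  have "0 < al * B" using below d by linarith
  then have B: "B > 0" using al by (simp add: zero_less_mult_iff)
  have "exp_potential c d' \<le> L * d'"
    unfolding L_def by (rule exp_potential_le_linear[OF c d'])
  also have "\<dots> \<le> L * (al * B + al * \<bar>W\<bar>)"
    using below al unfolding W_def L_def by (intro mult_left_mono) (auto simp: abs_divide)
  finally have "exp_potential c d' / al' \<le> L * (al / al') * (B + \<bar>W\<bar>)"
    using al by (simp add: divide_right_mono algebra_simps)
  also have "\<dots> \<le> L * r0 * (B + \<bar>W\<bar>)"
    using r B unfolding L_def by (intro mult_right_mono mult_left_mono) auto
  finally have "\<eta> * (exp_potential c d' / al') \<le> \<eta> * (L * r0 * (B + \<bar>W\<bar>))"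
    using \<eta> by (intro mult_left_mono) auto
  then have "\<eta> * exp_potential c d' / al' \<le> \<eta> * r0 * L * B + \<eta> * r0 * L * \<bar>W\<bar>"
    by (simp add: algebra_simps)
  then show ?thesis
    unfolding L_def W_def by (simp flip: exp_add)
qed

lemma drift_absorbs_exp_growth:
  fixes V e h q :: real
  assumes "V \<ge> 0" "e \<ge> 1" "h > 0" "q \<le> h / 2"
  shows "V * exp (h * e / 2) * (1 + q) - 2 * h * (V * exp (h * e / 2)) * e \<le> exp (- h) * V"
proof -
  define p where "p = h * e"
  have p: "p \<ge> h" unfolding p_def using assms by (simp add: mult_le_cancel_left1)
  have "1 + q - 2 * p \<le> exp (- (3/2) * p)"
    using assms p exp_ge_add_one_self[of "- (3/2) * p"] by simp
  then have "V * exp (p / 2) * (1 + q - 2 * p) \<le> V * exp (p / 2) * exp (- (3/2) * p)"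
    using assms by (intro mult_left_mono) auto
  also have "\<dots> = V * exp (- p)" by (simp add: mult.assoc flip: exp_add)
  also have "\<dots> \<le> V * exp (- h)" using p assms by (intro mult_left_mono) auto
  finally show ?thesis by (simp add: p_def algebra_simps)
qed

section \<open>Weighted moment bounds\<close>

lemma (in finite_measure) integrable_bounded_on_space:
  fixes f :: "'a \<Rightarrow> real"
  assumes "f \<in> borel_measurable M" "\<And>\<omega>. \<omega> \<in> space M \<Longrightarrow> \<bar>f \<omega>\<bar> \<le> K"
  shows "integrable M f"
  using assms by (intro integrable_const_bound[where B=K]) (auto intro!: AE_I2)

lemma (in sigma_finite_subalgebra) integral_mult_le_of_cond_exp_le:
  fixes Z g :: "'a \<Rightarrow> real"
  assumes [measurable]: "Z \<in> borel_measurable F" "g \<in> borel_measurable M"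
    and int: "integrable M (\<lambda>\<omega>. Z \<omega> * g \<omega>)" "integrable M Z"
    and Z: "\<And>\<omega>. \<omega> \<in> space M \<Longrightarrow> 0 \<le> Z \<omega>"
    and bound: "AE \<omega> in M. Z \<omega> \<noteq> 0 \<longrightarrow> real_cond_exp M F g \<omega> \<le> b"
  shows "(\<integral>\<omega>. Z \<omega> * g \<omega> \<partial>M) \<le> b * (\<integral>\<omega>. Z \<omega> \<partial>M)"
proof -
  have "(\<integral>\<omega>. Z \<omega> * g \<omega> \<partial>M) = (\<integral>\<omega>. Z \<omega> * real_cond_exp M F g \<omega> \<partial>M)"
    using real_cond_exp_intg[OF int(1)] by simp
  also have "\<dots> \<le> (\<integral>\<omega>. Z \<omega> * b \<partial>M)"
  proof (rule integral_mono_AE)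
    show "integrable M (\<lambda>\<omega>. Z \<omega> * real_cond_exp M F g \<omega>)"
      using real_cond_exp_intg[OF int(1)] by simp
    show "AE \<omega> in M. Z \<omega> * real_cond_exp M F g \<omega> \<le> Z \<omega> * b"
      using bound AE_space by eventually_elim (use Z in \<open>auto intro: mult_left_mono\<close>)
  qed (use int in simp)
  finally show ?thesis by (simp add: mult.commute)
qed

lemma exp_eq_one_plus_nn_integral:
  fixes lam w :: real assumes "lam > 0" "w \<ge> 0"
  shows "ennreal (exp (lam * w)) = 1 + (\<integral>\<^sup>+y. ennreal (lam * exp (lam * y)) * indicator {0..w} y \<partial>lborel)"
proof -
  have "(\<integral>\<^sup>+y. ennreal (lam * exp (lam * y)) * indicator {0..w} y \<partial>lborel)
      = ennreal (exp (lam * w) - exp (lam * 0))"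
    using assms by (intro nn_integral_FTC_Icc) (auto intro!: derivative_eq_intros)
  moreover have "exp (lam * w) \<ge> 1" using assms by simp
  moreover have "1 + ennreal (exp (lam * w) - 1) = ennreal (1 + (exp (lam * w) - 1))"
    using calculation(2) by (subst ennreal_plus) auto
  ultimately show ?thesis by simp
qed

text \<open>Layer cake: write \<open>exp (lam * h)\<close> as \<open>1\<close> plus the integral of \<open>lam * exp (lam * y)\<close> over
  \<open>{0..h}\<close>, then swap the integrals by Tonelli.\<close>

lemma (in sigma_finite_measure) nn_integral_mult_exp_layer_cake:
  fixes Z h :: "'a \<Rightarrow> real"
  assumes [measurable]: "Z \<in> borel_measurable M" "h \<in> borel_measurable M"
    and lam: "lam > 0" and Z: "\<And>\<omega>. \<omega> \<in> space M \<Longrightarrow> 0 \<le> Z \<omega>"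
    and h: "\<And>\<omega>. \<omega> \<in> space M \<Longrightarrow> 0 \<le> h \<omega>"
  shows "(\<integral>\<^sup>+\<omega>. ennreal (Z \<omega> * exp (lam * h \<omega>)) \<partial>M)
    = (\<integral>\<^sup>+\<omega>. ennreal (Z \<omega>) \<partial>M)
      + (\<integral>\<^sup>+y. ennreal (lam * exp (lam * y)) * indicator {0..} y
               * (\<integral>\<^sup>+\<omega>. ennreal (Z \<omega>) * indicator {\<omega> \<in> space M. y \<le> h \<omega>} \<omega> \<partial>M) \<partial>lborel)"
proof -
  interpret pair_sigma_finite M lborel
    by (simp add: pair_sigma_finite_def sigma_finite_measure_axioms lborel.sigma_finite_measure_axioms)
  define G where "G \<omega> y = ennreal (Z \<omega>) * ennreal (lam * exp (lam * y))
                              * (if 0 \<le> y \<and> y \<le> h \<omega> then 1 else 0)" for \<omega> y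
  have [measurable]: "case_prod G \<in> borel_measurable (M \<Otimes>\<^sub>M lborel)"
    unfolding G_def by measurable
  have "(\<integral>\<^sup>+\<omega>. ennreal (Z \<omega> * exp (lam * h \<omega>)) \<partial>M)
      = (\<integral>\<^sup>+\<omega>. ennreal (Z \<omega>) + (\<integral>\<^sup>+y. G \<omega> y \<partial>lborel) \<partial>M)"
    using exp_eq_one_plus_nn_integral[OF lam h] Z
    by (intro nn_integral_cong)
       (auto simp: G_def ennreal_mult distrib_left nn_integral_cmult[symmetric] mult_ac
             intro!: nn_integral_cong split: split_indicator)
  also have "\<dots> = (\<integral>\<^sup>+\<omega>. ennreal (Z \<omega>) \<partial>M) + (\<integral>\<^sup>+y. (\<integral>\<^sup>+\<omega>. G \<omega> y \<partial>M) \<partial>lborel)"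
    by (simp add: nn_integral_add Fubini')
  also have "(\<integral>\<^sup>+y. (\<integral>\<^sup>+\<omega>. G \<omega> y \<partial>M) \<partial>lborel)
      = (\<integral>\<^sup>+y. ennreal (lam * exp (lam * y)) * indicator {0..} y
               * (\<integral>\<^sup>+\<omega>. ennreal (Z \<omega>) * indicator {\<omega> \<in> space M. y \<le> h \<omega>} \<omega> \<partial>M) \<partial>lborel)"
    by (intro nn_integral_cong, subst nn_integral_cmult[symmetric])
       (auto intro!: nn_integral_cong simp: G_def mult.commute split: split_indicator)
  finally show ?thesis .
qed

lemma weighted_exp_moment_le:
  fixes Z h :: "'a \<Rightarrow> real" and Y :: "'b \<Rightarrow> real"
  assumes M: "sigma_finite_measure M" and N: "prob_space N"
    and [measurable]: "Z \<in> borel_measurable M" "h \<in> borel_measurable M" "Y \<in> borel_measurable N"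
    and lam: "lam > 0" and Z: "\<And>\<omega>. \<omega> \<in> space M \<Longrightarrow> 0 \<le> Z \<omega>"
    and h: "\<And>\<omega>. \<omega> \<in> space M \<Longrightarrow> 0 \<le> h \<omega>" and Y: "\<And>\<nu>. \<nu> \<in> space N \<Longrightarrow> 0 \<le> Y \<nu>"
    and tail: "\<And>y. y \<ge> 0 \<Longrightarrow> (\<integral>\<^sup>+\<omega>. ennreal (Z \<omega>) * indicator {\<omega> \<in> space M. y \<le> h \<omega>} \<omega> \<partial>M)
                 \<le> (\<integral>\<^sup>+\<omega>. ennreal (Z \<omega>) \<partial>M) * emeasure N {\<nu> \<in> space N. y \<le> Y \<nu>}"
  shows "(\<integral>\<^sup>+\<omega>. ennreal (Z \<omega> * exp (lam * h \<omega>)) \<partial>M)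
           \<le> (\<integral>\<^sup>+\<omega>. ennreal (Z \<omega>) \<partial>M) * (\<integral>\<^sup>+\<nu>. ennreal (exp (lam * Y \<nu>)) \<partial>N)"
proof -
  interpret N: prob_space N by (rule N)
  define EZ where "EZ = (\<integral>\<^sup>+\<omega>. ennreal (Z \<omega>) \<partial>M)"
  define T where "T = (\<integral>\<^sup>+y. ennreal (lam * exp (lam * y)) * indicator {0..} y
                         * emeasure N {\<nu> \<in> space N. y \<le> Y \<nu>} \<partial>lborel)"
  have "(\<integral>\<^sup>+\<omega>. ennreal (Z \<omega> * exp (lam * h \<omega>)) \<partial>M) = EZ
      + (\<integral>\<^sup>+y. ennreal (lam * exp (lam * y)) * indicator {0..} y
               * (\<integral>\<^sup>+\<omega>. ennreal (Z \<omega>) * indicator {\<omega> \<in> space M. y \<le> h \<omega>} \<omega> \<partial>M) \<partial>lborel)"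
    unfolding EZ_def by (rule sigma_finite_measure.nn_integral_mult_exp_layer_cake[OF M]) (use lam Z h in auto)
  also have "\<dots> \<le> EZ + (\<integral>\<^sup>+y. ennreal (lam * exp (lam * y)) * indicator {0..} y
               * (EZ * emeasure N {\<nu> \<in> space N. y \<le> Y \<nu>}) \<partial>lborel)"
    unfolding EZ_def
    by (intro add_left_mono nn_integral_mono) (auto intro!: mult_left_mono tail split: split_indicator)
  also have "\<dots> = EZ * (1 + T)"
    unfolding T_def by (simp add: nn_integral_cmult[symmetric] distrib_left mult_ac)
  also have "1 + T = (\<integral>\<^sup>+\<nu>. ennreal (exp (lam * Y \<nu>)) \<partial>N)"
    using N.nn_integral_mult_exp_layer_cake[of "\<lambda>_. 1" Y lam] lam Y
    by (simp add: T_def N.emeasure_space_1 nn_integral_cmult_indicator mult_ac)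
  finally show ?thesis unfolding EZ_def .
qed

lemma borel_measurable_comp_continuous_on:
  assumes "continuous_on X f" "g \<in> borel_measurable F" "\<And>\<omega>. \<omega> \<in> space F \<Longrightarrow> g \<omega> \<in> X"
  shows "(\<lambda>\<omega>. f (g \<omega>)) \<in> borel_measurable F"
proof -
  have "g \<in> F \<rightarrow>\<^sub>M restrict_space borel X"
    using assms(2,3) by (intro measurable_restrict_space2) auto
  then show ?thesis
    using measurable_comp borel_measurable_continuous_on_restrict[OF assms(1)] by (auto simp: comp_def)
qed

text \<open>\<open>D t\<close> stands for the optimality gap \<open>f (x t) - f x\<^sup>\<star>\<close>, and \<open>Fb\<close> for a bound on it.\<close>

locale drift_setting =
  fixes M :: "'w measure" and Fl :: "nat \<Rightarrow> 'w measure" and D :: "nat \<Rightarrow> 'w \<Rightarrow> real"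
    and \<alpha> :: "nat \<Rightarrow> real" and a u \<gamma> \<kappa> B lam Fb :: real
    and N :: "'v measure" and Y :: "'v \<Rightarrow> real"
  assumes M: "prob_space M" and N: "prob_space N"
    and subalg: "\<And>t. subalgebra M (Fl t)"
    and D_adapted: "\<And>t. D t \<in> borel_measurable (Fl t)"
    and D_nonneg: "\<And>t \<omega>. \<omega> \<in> space M \<Longrightarrow> 0 \<le> D t \<omega>"
    and D_le: "\<And>t \<omega>. \<omega> \<in> space M \<Longrightarrow> D t \<omega> \<le> Fb"
    and Fb: "Fb > 0"
    and a: "a > 0" and u: "u > 0" and \<gamma>: "0 \<le> \<gamma>" "\<gamma> \<le> 1"
    and alpha_def: "\<And>t. \<alpha> t = a / (u + real t) powr \<gamma>"
    and \<kappa>: "\<kappa> > 0" and B: "B > 0"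
    and drift: "\<And>t. AE \<omega> in M. \<alpha> t * B \<le> D t \<omega> \<longrightarrow>
          real_cond_exp M (Fl t) (\<lambda>\<omega>. D (Suc t) \<omega> - D t \<omega>) \<omega> \<le> - 2 * \<alpha> t * \<kappa>"
    and lam: "lam > 0" and Y_measurable[measurable]: "Y \<in> borel_measurable N"
    and Y_nonneg: "\<And>\<nu>. \<nu> \<in> space N \<Longrightarrow> 0 \<le> Y \<nu>"
    and exp_Y_finite: "(\<integral>\<^sup>+ \<nu>. ennreal (exp (lam * Y \<nu>)) \<partial>N) < \<infinity>"
    and tail: "\<And>t y. y \<ge> 0 \<Longrightarrow> AE \<omega> in M.
          real_cond_exp M (Fl t)
            (indicator {\<omega>' \<in> space M. \<alpha> t * y \<le> \<bar>D (Suc t) \<omega>' - D t \<omega>'\<bar>}) \<omega>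
          \<le> measure N {\<nu> \<in> space N. y \<le> Y \<nu>}"
begin

sublocale M: prob_space M by (rule M)
sublocale N: prob_space N by (rule N)

lemma alpha_pos: "\<alpha> t > 0"
  using a u by (simp add: alpha_def)

lemma D_measurable[measurable]: "D t \<in> borel_measurable M"
  by (rule measurable_from_subalg[OF subalg D_adapted])

lemma sigma_finite_subalgebra: "sigma_finite_subalgebra M (Fl t)"
  by (intro finite_measure_subalgebra_is_sigma_finite finite_measure_subalgebra.intro
        M.finite_measure_axioms finite_measure_subalgebra_axioms.intro subalg)

lemma abs_increment_le: "\<omega> \<in> space M \<Longrightarrow> \<bar>D (Suc t) \<omega> - D t \<omega>\<bar> \<le> Fb"
  using D_nonneg[of \<omega> t] D_le[of \<omega> t] D_nonneg[of \<omega> "Suc t"] D_le[of \<omega> "Suc t"] by linarith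

lemma alpha_step_bounds:
  "1 \<le> \<alpha> t / \<alpha> (Suc t)" "\<alpha> t / \<alpha> (Suc t) \<le> 1 + 1 / u" "1 / \<alpha> (Suc t) - 1 / \<alpha> t \<le> 1 / a"
proof -
  have p: "u + real t > 0" using u by simp
  have q: "\<alpha> t / \<alpha> (Suc t) = ((u + real t + 1) / (u + real t)) powr \<gamma>"
    using a p by (simp add: alpha_def powr_divide field_simps)
  have b1: "1 \<le> (u + real t + 1) / (u + real t)" using p by simp
  show "1 \<le> \<alpha> t / \<alpha> (Suc t)" unfolding q using b1 \<gamma> by (simp add: ge_one_powr_ge_zero)
  have "((u + real t + 1) / (u + real t)) powr \<gamma> \<le> ((u + real t + 1) / (u + real t)) powr 1"
    using b1 \<gamma> by (intro powr_mono) auto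
  also have "\<dots> = 1 + 1 / (u + real t)" using p by (simp add: field_simps)
  also have "\<dots> \<le> 1 + 1 / u" using u by (simp add: frac_le)
  finally show "\<alpha> t / \<alpha> (Suc t) \<le> 1 + 1 / u" unfolding q .
  have "1 / \<alpha> (Suc t) - 1 / \<alpha> t = ((u + real t + 1) powr \<gamma> - (u + real t) powr \<gamma>) / a"
    using a by (simp add: alpha_def diff_divide_distrib add_ac)
  also have "\<dots> \<le> 1 / a"
    using powr_add_one_le[of "u + real t" \<gamma>] p \<gamma> a by (intro divide_right_mono) auto
  finally show "1 / \<alpha> (Suc t) - 1 / \<alpha> t \<le> 1 / a" .
qed

definition mgf_Y :: real where
  "mgf_Y = (\<integral>\<nu>. exp (lam * Y \<nu>) \<partial>N)"

lemma integrable_exp_Y: "integrable N (\<lambda>\<nu>. exp (lam * Y \<nu>))"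
  using exp_Y_finite by (intro integrableI_nonneg) auto

lemma mgf_Y_ge_1: "1 \<le> mgf_Y"
proof -
  have "(\<integral>\<nu>. 1 \<partial>N) \<le> mgf_Y"
    unfolding mgf_Y_def using integrable_exp_Y lam Y_nonneg by (intro integral_mono_AE) (auto intro!: AE_I2)
  then show ?thesis by (simp add: N.prob_space)
qed

lemma weighted_tail_le:
  fixes Z :: "'w \<Rightarrow> real"
  assumes Z_meas: "Z \<in> borel_measurable (Fl t)" and Z: "\<And>\<omega>. \<omega> \<in> space M \<Longrightarrow> 0 \<le> Z \<omega> \<and> Z \<omega> \<le> Zmax"
    and y: "y \<ge> 0"
  shows "(\<integral>\<^sup>+\<omega>. ennreal (Z \<omega>) * indicator {\<omega> \<in> space M. y \<le> \<bar>D (Suc t) \<omega> - D t \<omega>\<bar> / \<alpha> t} \<omega> \<partial>M)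
           \<le> (\<integral>\<^sup>+\<omega>. ennreal (Z \<omega>) \<partial>M) * emeasure N {\<nu> \<in> space N. y \<le> Y \<nu>}"
proof -
  interpret sigma_finite_subalgebra M "Fl t" by (rule sigma_finite_subalgebra)
  define S where "S = {\<omega> \<in> space M. \<alpha> t * y \<le> \<bar>D (Suc t) \<omega> - D t \<omega>\<bar>}"
  define p where "p = measure N {\<nu> \<in> space N. y \<le> Y \<nu>}"
  have [measurable]: "Z \<in> borel_measurable M" by (rule measurable_from_subalg[OF subalg Z_meas])
  have [measurable]: "S \<in> sets M" unfolding S_def by measurable
  have S_eq: "{\<omega> \<in> space M. y \<le> \<bar>D (Suc t) \<omega> - D t \<omega>\<bar> / \<alpha> t} = S"
    unfolding S_def using alpha_pos[of t] by (auto simp: field_simps)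
  have int_Z: "integrable M Z" and int_ZS: "integrable M (\<lambda>\<omega>. Z \<omega> * indicator S \<omega>)"
    using Z by (auto intro!: M.integrable_bounded_on_space[where K=Zmax] split: split_indicator dest!: Z)
  have "(\<integral>\<omega>. Z \<omega> * indicator S \<omega> \<partial>M) \<le> p * (\<integral>\<omega>. Z \<omega> \<partial>M)"
    using Z tail[OF y, of t] unfolding S_def[symmetric] p_def[symmetric]
    by (intro integral_mult_le_of_cond_exp_le int_ZS int_Z Z_meas) auto
  then have "ennreal (\<integral>\<omega>. Z \<omega> * indicator S \<omega> \<partial>M) \<le> ennreal (\<integral>\<omega>. Z \<omega> \<partial>M) * ennreal p"
    using Z by (simp add: ennreal_mult''[symmetric] ennreal_leI mult.commute p_def)
  moreover have "(\<integral>\<^sup>+\<omega>. ennreal (Z \<omega>) * indicator S \<omega> \<partial>M) = ennreal (\<integral>\<omega>. Z \<omega> * indicator S \<omega> \<partial>M)"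
    using Z by (subst nn_integral_eq_integral[OF int_ZS, symmetric])
      (auto intro!: AE_I2 nn_integral_cong split: split_indicator)
  moreover have "(\<integral>\<^sup>+\<omega>. ennreal (Z \<omega>) \<partial>M) = ennreal (\<integral>\<omega>. Z \<omega> \<partial>M)"
    using Z by (intro nn_integral_eq_integral int_Z) (auto intro!: AE_I2)
  ultimately show ?thesis
    unfolding S_eq by (simp add: N.emeasure_eq_measure p_def)
qed

lemma weighted_exp_increment_le:
  fixes Z :: "'w \<Rightarrow> real"
  assumes Z_meas: "Z \<in> borel_measurable (Fl t)" and Z: "\<And>\<omega>. \<omega> \<in> space M \<Longrightarrow> 0 \<le> Z \<omega> \<and> Z \<omega> \<le> Zmax"
  shows "(\<integral>\<omega>. Z \<omega> * exp (lam * (\<bar>D (Suc t) \<omega> - D t \<omega>\<bar> / \<alpha> t)) \<partial>M) \<le> (\<integral>\<omega>. Z \<omega> \<partial>M) * mgf_Y"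
proof -
  define h where "h \<omega> = \<bar>D (Suc t) \<omega> - D t \<omega>\<bar> / \<alpha> t" for \<omega>
  have [measurable]: "Z \<in> borel_measurable M" "h \<in> borel_measurable M"
    unfolding h_def by (rule measurable_from_subalg[OF subalg Z_meas]) measurable
  have h: "0 \<le> h \<omega> \<and> h \<omega> \<le> Fb / \<alpha> t" if "\<omega> \<in> space M" for \<omega>
    unfolding h_def using alpha_pos[of t] abs_increment_le[OF that, of t] by (simp add: divide_right_mono)
  have int_Z: "integrable M Z"
    using Z by (intro M.integrable_bounded_on_space[where K=Zmax]) auto
  have "\<bar>Z \<omega> * exp (lam * h \<omega>)\<bar> \<le> Zmax * exp (lam * (Fb / \<alpha> t))" if "\<omega> \<in> space M" for \<omega>
    using Z[OF that] h[OF that] lam mult_left_mono[of "h \<omega>" "Fb / \<alpha> t" lam]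
    by (auto simp: abs_mult intro!: mult_mono)
  then have int_Zh: "integrable M (\<lambda>\<omega>. Z \<omega> * exp (lam * h \<omega>))"
    by (intro M.integrable_bounded_on_space) auto
  have "ennreal (\<integral>\<omega>. Z \<omega> * exp (lam * h \<omega>) \<partial>M) = (\<integral>\<^sup>+\<omega>. ennreal (Z \<omega> * exp (lam * h \<omega>)) \<partial>M)"
    using Z by (intro nn_integral_eq_integral[symmetric] int_Zh) (auto intro!: AE_I2)
  also have "\<dots> \<le> (\<integral>\<^sup>+\<omega>. ennreal (Z \<omega>) \<partial>M) * (\<integral>\<^sup>+\<nu>. ennreal (exp (lam * Y \<nu>)) \<partial>N)"
    using weighted_tail_le[OF Z_meas Z] Z h Y_nonneg
    by (intro weighted_exp_moment_le M.sigma_finite_measure_axioms N lam) (auto simp: h_def)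
  also have "\<dots> = ennreal ((\<integral>\<omega>. Z \<omega> \<partial>M) * mgf_Y)"
    using Z mgf_Y_ge_1 unfolding mgf_Y_def
    by (simp add: nn_integral_eq_integral[OF int_Z] nn_integral_eq_integral[OF integrable_exp_Y]
        ennreal_mult integral_nonneg_AE AE_I2)
  finally show ?thesis
    using Z mgf_Y_ge_1 by (simp add: h_def ennreal_le_iff integral_nonneg_AE)
qed

subsection \<open>The Lyapunov function\<close>

definition scale :: real where "scale = a * \<kappa> / 2"
definition lip :: real where "lip = exp (Fb / scale)"
definition ratio_bound :: real where "ratio_bound = 1 + 1 / u"
definition gain :: real where "gain = ratio_bound * lip * (1 + Fb / (2 * scale))"

definition quad_coeff :: "real \<Rightarrow> nat \<Rightarrow> real" where
  "quad_coeff \<eta> t = \<eta> * ratio_bound * lip / (2 * scale) * \<alpha> t * (32 / lam\<^sup>2) + \<eta>\<^sup>2 * gain\<^sup>2 * (16 / lam\<^sup>2)"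

definition lyapunov :: "real \<Rightarrow> nat \<Rightarrow> 'w \<Rightarrow> real" where
  "lyapunov \<eta> t \<omega> = exp (\<eta> * exp_potential scale (D t \<omega>) / \<alpha> t)"

text \<open>The \<open>Fl t\<close>-measurable factor in front of the increment in the one-step bound above the
  threshold; conditioning on \<open>Fl t\<close> against it is how (C1) and (C2) enter.\<close>

definition drift_weight :: "real \<Rightarrow> nat \<Rightarrow> 'w \<Rightarrow> real" where
  "drift_weight \<eta> t \<omega> =
     of_bool (\<alpha> t * B \<le> D t \<omega>) * lyapunov \<eta> t \<omega> * exp (\<eta> * \<kappa> * exp (D t \<omega> / scale) / 2)"

lemma scale_pos: "scale > 0"
  using a \<kappa> by (simp add: scale_def)

lemma lip_ge_1: "1 \<le> lip"
  using Fb scale_pos by (simp add: lip_def)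

lemma ratio_bound_ge_1: "1 \<le> ratio_bound"
  using u by (simp add: ratio_bound_def)

lemma ratio_bound_lip_le_gain: "ratio_bound * lip \<le> gain"
  using mult_left_mono[of 1 "1 + Fb / (2 * scale)" "ratio_bound * lip"] lip_ge_1 ratio_bound_ge_1 Fb scale_pos
  by (simp add: gain_def)

lemma gain_pos: "gain > 0"
  using ratio_bound_lip_le_gain lip_ge_1 ratio_bound_ge_1 by (smt (verit) mult_ge1_I)

lemma quad_coeff_nonneg: "\<eta> \<ge> 0 \<Longrightarrow> 0 \<le> quad_coeff \<eta> t"
  unfolding quad_coeff_def using ratio_bound_ge_1 lip_ge_1 scale_pos alpha_pos[of t] by simp

lemma lyapunov_pos[simp]: "0 < lyapunov \<eta> t \<omega>"
  by (simp add: lyapunov_def)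

lemma lyapunov_measurable[measurable]: "lyapunov \<eta> t \<in> borel_measurable (Fl t)"
  using D_adapted[of t] unfolding lyapunov_def exp_potential_def by measurable

lemma lyapunov_measurable_M[measurable]: "lyapunov \<eta> t \<in> borel_measurable M"
  by (rule measurable_from_subalg[OF subalg lyapunov_measurable])

lemma lyapunov_le:
  assumes "\<omega> \<in> space M" "\<eta> \<ge> 0"
  shows "lyapunov \<eta> t \<omega> \<le> exp (\<eta> * lip * Fb / \<alpha> t)"
proof -
  have "exp_potential scale (D t \<omega>) \<le> lip * Fb"
    using exp_potential_le_linear[OF scale_pos D_nonneg D_le] assms(1) lip_ge_1 D_le[OF assms(1), of t]
    unfolding lip_def by (smt (verit) mult_left_mono)
  then show ?thesis
    unfolding lyapunov_def using assms alpha_pos[of t]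
    by (simp add: divide_right_mono mult_left_mono mult.assoc)
qed

lemma integrable_lyapunov: "\<eta> \<ge> 0 \<Longrightarrow> integrable M (lyapunov \<eta> t)"
  using lyapunov_le by (intro M.integrable_bounded_on_space[where K="exp (\<eta> * lip * Fb / \<alpha> t)"])
    (auto simp: abs_of_pos)

lemma integrable_lyapunov_mult:
  assumes "\<eta> \<ge> 0" "g \<in> borel_measurable M" "\<And>\<omega>. \<omega> \<in> space M \<Longrightarrow> \<bar>g \<omega>\<bar> \<le> 1"
  shows "integrable M (\<lambda>\<omega>. lyapunov \<eta> t \<omega> * g \<omega>)"
proof (rule M.integrable_bounded_on_space)
  fix \<omega> assume \<omega>: "\<omega> \<in> space M"
  have "\<bar>lyapunov \<eta> t \<omega> * g \<omega>\<bar> \<le> lyapunov \<eta> t \<omega> * 1"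
    using assms(3)[OF \<omega>] by (simp add: abs_mult abs_of_pos)
  also have "\<dots> \<le> exp (\<eta> * lip * Fb / \<alpha> t)"
    using lyapunov_le[OF \<omega> assms(1)] by simp
  finally show "\<bar>lyapunov \<eta> t \<omega> * g \<omega>\<bar> \<le> exp (\<eta> * lip * Fb / \<alpha> t)" .
qed (use assms(2) in simp)

lemma drift_weight_measurable[measurable]: "drift_weight \<eta> t \<in> borel_measurable (Fl t)"
  using D_adapted[of t] unfolding drift_weight_def by measurable

lemma drift_weight_measurable_M[measurable]: "drift_weight \<eta> t \<in> borel_measurable M"
  by (rule measurable_from_subalg[OF subalg drift_weight_measurable])

lemma drift_weight_bounds:
  assumes "\<omega> \<in> space M" "\<eta> \<ge> 0"
  shows "0 \<le> drift_weight \<eta> t \<omega>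
    \<and> drift_weight \<eta> t \<omega> \<le> exp (\<eta> * lip * Fb / \<alpha> t) * exp (\<eta> * \<kappa> * lip / 2)"
proof -
  have "exp (D t \<omega> / scale) \<le> lip"
    using D_le[OF assms(1)] scale_pos by (simp add: lip_def divide_right_mono)
  then have "exp (\<eta> * \<kappa> * exp (D t \<omega> / scale) / 2) \<le> exp (\<eta> * \<kappa> * lip / 2)"
    using assms \<kappa> by (simp add: divide_right_mono mult_left_mono)
  then show ?thesis
    unfolding drift_weight_def using lyapunov_le[OF assms, of t]
    by (auto simp: lyapunov_def intro: mult_mono)
qed

lemma integrable_drift_weight_terms:
  assumes \<eta>: "\<eta> \<ge> 0"
  shows "integrable M (drift_weight \<eta> t)"
    "integrable M (\<lambda>\<omega>. drift_weight \<eta> t \<omega> * exp (D t \<omega> / scale))"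
    "integrable M (\<lambda>\<omega>. drift_weight \<eta> t \<omega> * exp (D t \<omega> / scale) * (D (Suc t) \<omega> - D t \<omega>))"
    "integrable M (\<lambda>\<omega>. drift_weight \<eta> t \<omega> * exp (lam * (\<bar>D (Suc t) \<omega> - D t \<omega>\<bar> / \<alpha> t)))"
proof -
  define Pmax where "Pmax = exp (\<eta> * lip * Fb / \<alpha> t) * exp (\<eta> * \<kappa> * lip / 2)"
  have bounds: "0 \<le> drift_weight \<eta> t \<omega> \<and> drift_weight \<eta> t \<omega> \<le> Pmax
      \<and> 0 \<le> exp (D t \<omega> / scale) \<and> exp (D t \<omega> / scale) \<le> lip \<and> \<bar>D (Suc t) \<omega> - D t \<omega>\<bar> \<le> Fb
      \<and> exp (lam * (\<bar>D (Suc t) \<omega> - D t \<omega>\<bar> / \<alpha> t)) \<le> exp (lam * (Fb / \<alpha> t))"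
    if "\<omega> \<in> space M" for \<omega>
    using drift_weight_bounds[OF that \<eta>, of t] D_le[OF that, of t] abs_increment_le[OF that, of t]
      scale_pos alpha_pos[of t] lam
    unfolding Pmax_def lip_def by (auto simp: divide_right_mono mult_left_mono)
  show "integrable M (drift_weight \<eta> t)"
    by (intro M.integrable_bounded_on_space[where K=Pmax]) (auto dest!: bounds)
  show "integrable M (\<lambda>\<omega>. drift_weight \<eta> t \<omega> * exp (D t \<omega> / scale))"
    using lip_ge_1 by (intro M.integrable_bounded_on_space[where K="Pmax * lip"])
      (auto simp: abs_mult intro!: mult_mono dest!: bounds)
  show "integrable M (\<lambda>\<omega>. drift_weight \<eta> t \<omega> * exp (D t \<omega> / scale) * (D (Suc t) \<omega> - D t \<omega>))"
    using lip_ge_1 by (intro M.integrable_bounded_on_space[where K="Pmax * lip * Fb"])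
      (auto simp: abs_mult intro!: mult_mono dest!: bounds)
  show "integrable M (\<lambda>\<omega>. drift_weight \<eta> t \<omega> * exp (lam * (\<bar>D (Suc t) \<omega> - D t \<omega>\<bar> / \<alpha> t)))"
    by (intro M.integrable_bounded_on_space[where K="Pmax * exp (lam * (Fb / \<alpha> t))"])
      (auto simp: abs_mult intro!: mult_mono dest!: bounds)
qed

lemma lyapunov_factor_above:
  assumes \<eta>: "\<eta> > 0" "\<eta> * gain \<le> lam / 2" and \<omega>: "\<omega> \<in> space M"
  shows "lyapunov \<eta> (Suc t) \<omega>
    \<le> exp (\<eta> * exp_potential scale (D t \<omega>) / \<alpha> t + \<eta> * (\<kappa> / 2) * exp (D t \<omega> / scale))
      * (1 + \<eta> * (\<alpha> t / \<alpha> (Suc t)) * exp (D t \<omega> / scale) * ((D (Suc t) \<omega> - D t \<omega>) / \<alpha> t)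
         + quad_coeff \<eta> t * exp (lam * \<bar>(D (Suc t) \<omega> - D t \<omega>) / \<alpha> t\<bar>))"
proof -
  have gain: "ratio_bound * exp (Fb / scale) * (1 + Fb / (2 * scale)) \<le> gain"
    by (simp add: gain_def lip_def)
  have scale_a: "scale / a = \<kappa> / 2" using a by (simp add: scale_def)
  show ?thesis
    using exp_rescaled_potential_step_le[OF scale_pos a lam \<eta>(1) gain \<eta>(2)
        D_nonneg[OF \<omega>, of t] D_le[OF \<omega>, of t] D_nonneg[OF \<omega>, of "Suc t"] D_le[OF \<omega>, of "Suc t"]
        alpha_pos[of t] alpha_pos[of "Suc t"] alpha_step_bounds(1)[of t]
        alpha_step_bounds(2)[of t, folded ratio_bound_def] alpha_step_bounds(3)[of t]]
    unfolding lyapunov_def quad_coeff_def lip_def scale_a .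
qed

lemma lyapunov_factor_below:
  assumes \<eta>: "\<eta> > 0" "\<eta> * gain \<le> lam / 2" and \<omega>: "\<omega> \<in> space M" and below: "D t \<omega> < \<alpha> t * B"
  shows "lyapunov \<eta> (Suc t) \<omega>
           \<le> exp (\<eta> * ratio_bound * lip * B) * exp (lam * (\<bar>D (Suc t) \<omega> - D t \<omega>\<bar> / \<alpha> t))"
proof -
  have "\<eta> * (ratio_bound * lip) \<le> \<eta> * gain"
    using ratio_bound_lip_le_gain \<eta> by (intro mult_left_mono) auto
  then have "\<eta> * ratio_bound * lip \<le> lam"
    using \<eta> lam unfolding mult.assoc by linarith
  then have "exp (\<eta> * ratio_bound * lip * \<bar>(D (Suc t) \<omega> - D t \<omega>) / \<alpha> t\<bar>)
      \<le> exp (lam * (\<bar>D (Suc t) \<omega> - D t \<omega>\<bar> / \<alpha> t))"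
    using alpha_pos[of t] by (simp add: abs_divide) (intro divide_right_mono mult_right_mono, auto)
  moreover have "lyapunov \<eta> (Suc t) \<omega> \<le> exp (\<eta> * ratio_bound * lip * B)
      * exp (\<eta> * ratio_bound * lip * \<bar>(D (Suc t) \<omega> - D t \<omega>) / \<alpha> t\<bar>)"
    using exp_rescaled_potential_below_le[OF scale_pos \<eta>(1) D_nonneg[OF \<omega>, of t]
        D_nonneg[OF \<omega>, of "Suc t"] D_le[OF \<omega>, of "Suc t"] alpha_pos[of t] alpha_pos[of "Suc t"]
        alpha_step_bounds(2)[of t, folded ratio_bound_def] below]
    unfolding lyapunov_def lip_def by simp
  ultimately show ?thesis by (smt (verit) exp_gt_zero mult_left_mono)
qed

lemma integral_drift_weight_increment_le:
  assumes \<eta>: "\<eta> \<ge> 0"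
  shows "(\<integral>\<omega>. drift_weight \<eta> t \<omega> * exp (D t \<omega> / scale) * (D (Suc t) \<omega> - D t \<omega>) \<partial>M)
           \<le> - 2 * \<alpha> t * \<kappa> * (\<integral>\<omega>. drift_weight \<eta> t \<omega> * exp (D t \<omega> / scale) \<partial>M)"
proof -
  interpret sigma_finite_subalgebra M "Fl t" by (rule sigma_finite_subalgebra)
  define Z where "Z \<omega> = drift_weight \<eta> t \<omega> * exp (D t \<omega> / scale)" for \<omega>
  define Zmax where "Zmax = exp (\<eta> * lip * Fb / \<alpha> t) * exp (\<eta> * \<kappa> * lip / 2) * lip"
  have Z_meas[measurable]: "Z \<in> borel_measurable (Fl t)"
    using D_adapted[of t] unfolding Z_def by measurable
  have Z_M[measurable]: "Z \<in> borel_measurable M"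
    by (rule measurable_from_subalg[OF subalg Z_meas])
  have Z: "0 \<le> Z \<omega> \<and> Z \<omega> \<le> Zmax" if "\<omega> \<in> space M" for \<omega>
    using drift_weight_bounds[OF that \<eta>, of t] D_le[OF that, of t] scale_pos
    unfolding Z_def Zmax_def by (auto intro!: mult_mono simp: lip_def divide_right_mono)
  have "\<bar>Z \<omega> * (D (Suc t) \<omega> - D t \<omega>)\<bar> \<le> Zmax * Fb" if "\<omega> \<in> space M" for \<omega>
    using Z[OF that] abs_increment_le[OF that, of t] by (auto simp: abs_mult intro!: mult_mono)
  then have "integrable M (\<lambda>\<omega>. Z \<omega> * (D (Suc t) \<omega> - D t \<omega>))"
    by (intro M.integrable_bounded_on_space) auto
  moreover have "integrable M Z"
    using Z by (intro M.integrable_bounded_on_space[where K=Zmax]) auto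
  moreover have "AE \<omega> in M. Z \<omega> \<noteq> 0 \<longrightarrow>
      real_cond_exp M (Fl t) (\<lambda>\<omega>. D (Suc t) \<omega> - D t \<omega>) \<omega> \<le> - 2 * \<alpha> t * \<kappa>"
    using drift[of t] by eventually_elim (auto simp: Z_def drift_weight_def)
  ultimately show ?thesis
    using Z unfolding Z_def[symmetric] by (intro integral_mult_le_of_cond_exp_le) auto
qed

lemma lyapunov_above_le_drift_weight:
  assumes \<eta>: "\<eta> > 0" "\<eta> * gain \<le> lam / 2" and \<omega>: "\<omega> \<in> space M"
  shows "lyapunov \<eta> (Suc t) \<omega> * of_bool (\<alpha> t * B \<le> D t \<omega>)
    \<le> drift_weight \<eta> t \<omega>
       + \<eta> * (\<alpha> t / \<alpha> (Suc t)) / \<alpha> t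
         * (drift_weight \<eta> t \<omega> * exp (D t \<omega> / scale) * (D (Suc t) \<omega> - D t \<omega>))
       + quad_coeff \<eta> t * (drift_weight \<eta> t \<omega> * exp (lam * (\<bar>D (Suc t) \<omega> - D t \<omega>\<bar> / \<alpha> t)))"
proof (cases "\<alpha> t * B \<le> D t \<omega>")
  case True
  define P e \<Delta> where "P = drift_weight \<eta> t \<omega>" and "e = exp (D t \<omega> / scale)"
    and "\<Delta> = D (Suc t) \<omega> - D t \<omega>"
  have "exp (\<eta> * exp_potential scale (D t \<omega>) / \<alpha> t + \<eta> * (\<kappa> / 2) * e) = P"
    using True by (simp add: P_def drift_weight_def lyapunov_def e_def exp_add mult_ac)
  moreover have "P * (1 + \<eta> * (\<alpha> t / \<alpha> (Suc t)) * e * (\<Delta> / \<alpha> t) + quad_coeff \<eta> t * exp (lam * (\<bar>\<Delta>\<bar> / \<alpha> t)))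
      = P + \<eta> * (\<alpha> t / \<alpha> (Suc t)) / \<alpha> t * (P * e * \<Delta>) + quad_coeff \<eta> t * (P * exp (lam * (\<bar>\<Delta>\<bar> / \<alpha> t)))"
    by (simp add: algebra_simps)
  ultimately show ?thesis
    using lyapunov_factor_above[OF \<eta> \<omega>, of t] True alpha_pos[of t]
    by (simp add: P_def e_def \<Delta>_def abs_divide)
qed (simp add: drift_weight_def)

lemma drift_weight_absorb_le:
  assumes \<eta>: "\<eta> > 0" and small: "quad_coeff \<eta> t * mgf_Y \<le> \<eta> * \<kappa> / 2" and \<omega>: "\<omega> \<in> space M"
  shows "drift_weight \<eta> t \<omega> * (1 + quad_coeff \<eta> t * mgf_Y)
           - 2 * \<eta> * \<kappa> * (drift_weight \<eta> t \<omega> * exp (D t \<omega> / scale))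
         \<le> exp (- (\<eta> * \<kappa>)) * lyapunov \<eta> t \<omega>"
proof (cases "\<alpha> t * B \<le> D t \<omega>")
  case True
  have "1 \<le> exp (D t \<omega> / scale)"
    using D_nonneg[OF \<omega>, of t] scale_pos by simp
  then show ?thesis
    using drift_absorbs_exp_growth[of "lyapunov \<eta> t \<omega>" "exp (D t \<omega> / scale)" "\<eta> * \<kappa>"
        "quad_coeff \<eta> t * mgf_Y"] True \<eta> \<kappa> small
    by (simp add: drift_weight_def less_imp_le mult_ac)
qed (simp add: drift_weight_def less_imp_le)

lemma lyapunov_step_above:
  assumes \<eta>: "\<eta> > 0" "\<eta> * gain \<le> lam / 2" and small: "quad_coeff \<eta> t * mgf_Y \<le> \<eta> * \<kappa> / 2"
  shows "(\<integral>\<omega>. lyapunov \<eta> (Suc t) \<omega> * of_bool (\<alpha> t * B \<le> D t \<omega>) \<partial>M)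
           \<le> exp (- (\<eta> * \<kappa>)) * (\<integral>\<omega>. lyapunov \<eta> t \<omega> \<partial>M)"
proof -
  define P where "P = drift_weight \<eta> t"
  define e where "e \<omega> = exp (D t \<omega> / scale)" for \<omega>
  define \<Delta> where "\<Delta> \<omega> = D (Suc t) \<omega> - D t \<omega>" for \<omega>
  define Xp where "Xp \<omega> = exp (lam * (\<bar>D (Suc t) \<omega> - D t \<omega>\<bar> / \<alpha> t))" for \<omega>
  define r Q where "r = \<alpha> t / \<alpha> (Suc t)" and "Q = quad_coeff \<eta> t"
  define Pmax where "Pmax = exp (\<eta> * lip * Fb / \<alpha> t) * exp (\<eta> * \<kappa> * lip / 2)"
  have P: "0 \<le> P \<omega> \<and> P \<omega> \<le> Pmax \<and> 1 \<le> e \<omega>" if "\<omega> \<in> space M" for \<omega>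
    using drift_weight_bounds[OF that, of \<eta> t] D_nonneg[OF that, of t] scale_pos \<eta>
    unfolding P_def Pmax_def e_def by auto
  note int = integrable_drift_weight_terms[of \<eta> t, folded P_def e_def \<Delta>_def Xp_def]
  have int_P: "integrable M P" and int_Pe: "integrable M (\<lambda>\<omega>. P \<omega> * e \<omega>)"
    and int_Pe\<Delta>: "integrable M (\<lambda>\<omega>. P \<omega> * e \<omega> * \<Delta> \<omega>)" and int_PX: "integrable M (\<lambda>\<omega>. P \<omega> * Xp \<omega>)"
    using int \<eta> by (simp_all add: P_def e_def \<Delta>_def Xp_def)
  have int_L: "integrable M (\<lambda>\<omega>. lyapunov \<eta> (Suc t) \<omega> * of_bool (\<alpha> t * B \<le> D t \<omega>))"
    using \<eta> by (intro integrable_lyapunov_mult) auto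
  have pointwise: "lyapunov \<eta> (Suc t) \<omega> * of_bool (\<alpha> t * B \<le> D t \<omega>)
      \<le> P \<omega> + \<eta> * r / \<alpha> t * (P \<omega> * e \<omega> * \<Delta> \<omega>) + Q * (P \<omega> * Xp \<omega>)"
    if "\<omega> \<in> space M" for \<omega>
    using lyapunov_above_le_drift_weight[OF \<eta> that, of t]
    unfolding P_def e_def \<Delta>_def Xp_def r_def Q_def by simp
  have "(\<integral>\<omega>. lyapunov \<eta> (Suc t) \<omega> * of_bool (\<alpha> t * B \<le> D t \<omega>) \<partial>M)
      \<le> (\<integral>\<omega>. P \<omega> + \<eta> * r / \<alpha> t * (P \<omega> * e \<omega> * \<Delta> \<omega>) + Q * (P \<omega> * Xp \<omega>) \<partial>M)"
    using int_L int_P int_Pe\<Delta> int_PX pointwise by (intro integral_mono) auto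
  also have "\<dots> = (\<integral>\<omega>. P \<omega> \<partial>M) + \<eta> * r / \<alpha> t * (\<integral>\<omega>. P \<omega> * e \<omega> * \<Delta> \<omega> \<partial>M)
      + Q * (\<integral>\<omega>. P \<omega> * Xp \<omega> \<partial>M)"
    using int_P int_Pe\<Delta> int_PX by simp
  also have "\<dots> \<le> (\<integral>\<omega>. P \<omega> \<partial>M) + \<eta> * r / \<alpha> t * (- 2 * \<alpha> t * \<kappa> * (\<integral>\<omega>. P \<omega> * e \<omega> \<partial>M))
      + Q * ((\<integral>\<omega>. P \<omega> \<partial>M) * mgf_Y)"
    using integral_drift_weight_increment_le[of \<eta> t]
      weighted_exp_increment_le[OF drift_weight_measurable, of \<eta> t Pmax] P \<eta>
      alpha_step_bounds(1)[of t] alpha_pos[of t] alpha_pos[of "Suc t"] quad_coeff_nonneg[of \<eta> t]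
    unfolding P_def e_def \<Delta>_def Xp_def r_def Q_def
    by (intro add_mono mult_left_mono) auto
  also have "\<dots> \<le> (\<integral>\<omega>. P \<omega> * (1 + Q * mgf_Y) - 2 * \<eta> * \<kappa> * (P \<omega> * e \<omega>) \<partial>M)"
  proof -
    have "0 \<le> (\<integral>\<omega>. P \<omega> * e \<omega> \<partial>M)"
      by (intro integral_nonneg_AE AE_I2) (auto dest!: P)
    then have "2 * \<eta> * \<kappa> * (\<integral>\<omega>. P \<omega> * e \<omega> \<partial>M) * 1 \<le> 2 * \<eta> * \<kappa> * (\<integral>\<omega>. P \<omega> * e \<omega> \<partial>M) * r"
      using alpha_step_bounds(1)[of t] \<eta> \<kappa> unfolding r_def by (intro mult_left_mono) auto
    moreover have "\<eta> * r / \<alpha> t * (- 2 * \<alpha> t * \<kappa> * (\<integral>\<omega>. P \<omega> * e \<omega> \<partial>M))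
        = - (2 * \<eta> * \<kappa> * (\<integral>\<omega>. P \<omega> * e \<omega> \<partial>M) * r)"
      using alpha_pos[of t] by (simp add: field_simps)
    moreover have "(\<integral>\<omega>. P \<omega> * (1 + Q * mgf_Y) - 2 * \<eta> * \<kappa> * (P \<omega> * e \<omega>) \<partial>M)
        = (\<integral>\<omega>. P \<omega> \<partial>M) * (1 + Q * mgf_Y) - 2 * \<eta> * \<kappa> * (\<integral>\<omega>. P \<omega> * e \<omega> \<partial>M)"
      using int_P int_Pe by simp
    moreover have "(\<integral>\<omega>. P \<omega> \<partial>M) * (1 + Q * mgf_Y) = (\<integral>\<omega>. P \<omega> \<partial>M) + Q * ((\<integral>\<omega>. P \<omega> \<partial>M) * mgf_Y)"
      by (simp add: algebra_simps)
    ultimately show ?thesis by linarith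
  qed
  also have "\<dots> \<le> (\<integral>\<omega>. exp (- (\<eta> * \<kappa>)) * lyapunov \<eta> t \<omega> \<partial>M)"
    using drift_weight_absorb_le[OF \<eta>(1) small] int_P int_Pe integrable_lyapunov[of \<eta> t] \<eta>
    unfolding P_def e_def Q_def by (intro integral_mono) auto
  finally show ?thesis by simp
qed

lemma lyapunov_step_below:
  assumes \<eta>: "\<eta> > 0" "\<eta> * gain \<le> lam / 2"
  shows "(\<integral>\<omega>. lyapunov \<eta> (Suc t) \<omega> * of_bool (D t \<omega> < \<alpha> t * B) \<partial>M)
           \<le> exp (\<eta> * ratio_bound * lip * B) * mgf_Y"
proof -
  define Z where "Z \<omega> = (of_bool (D t \<omega> < \<alpha> t * B) :: real)" for \<omega>
  define Xp where "Xp \<omega> = exp (lam * (\<bar>D (Suc t) \<omega> - D t \<omega>\<bar> / \<alpha> t))" for \<omega>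
  have Z_meas[measurable]: "Z \<in> borel_measurable (Fl t)"
    using D_adapted[of t] unfolding Z_def by measurable
  have [measurable]: "Z \<in> borel_measurable M" "Xp \<in> borel_measurable M"
    unfolding Xp_def by (rule measurable_from_subalg[OF subalg Z_meas]) measurable
  have Xp: "0 \<le> Xp \<omega> \<and> Xp \<omega> \<le> exp (lam * (Fb / \<alpha> t))" if "\<omega> \<in> space M" for \<omega>
    using abs_increment_le[OF that, of t] alpha_pos[of t] lam
    unfolding Xp_def by (simp add: divide_right_mono mult_left_mono)
  have "(\<integral>\<omega>. lyapunov \<eta> (Suc t) \<omega> * Z \<omega> \<partial>M) \<le> (\<integral>\<omega>. exp (\<eta> * ratio_bound * lip * B) * (Z \<omega> * Xp \<omega>) \<partial>M)"
  proof (rule integral_mono)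
    show "integrable M (\<lambda>\<omega>. lyapunov \<eta> (Suc t) \<omega> * Z \<omega>)"
      using \<eta> by (intro integrable_lyapunov_mult) (auto simp: Z_def)
    show "integrable M (\<lambda>\<omega>. exp (\<eta> * ratio_bound * lip * B) * (Z \<omega> * Xp \<omega>))"
      using Xp by (intro integrable_mult_right M.integrable_bounded_on_space[where K="exp (lam * (Fb / \<alpha> t))"])
        (auto simp: Z_def)
  qed (use lyapunov_factor_below[OF \<eta>] in \<open>auto simp: Z_def Xp_def\<close>)
  also have "\<dots> \<le> exp (\<eta> * ratio_bound * lip * B) * ((\<integral>\<omega>. Z \<omega> \<partial>M) * mgf_Y)"
    using weighted_exp_increment_le[OF Z_meas, of 1] by (simp add: Z_def Xp_def)
  also have "\<dots> \<le> exp (\<eta> * ratio_bound * lip * B) * (1 * mgf_Y)"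
    using mgf_Y_ge_1
    by (intro mult_left_mono mult_right_mono M.integral_le_const AE_I2
          M.integrable_bounded_on_space[where K=1]) (auto simp: Z_def)
  finally show ?thesis unfolding Z_def by simp
qed

lemma lyapunov_step:
  assumes \<eta>: "\<eta> > 0" "\<eta> * gain \<le> lam / 2" and small: "quad_coeff \<eta> t * mgf_Y \<le> \<eta> * \<kappa> / 2"
  shows "(\<integral>\<omega>. lyapunov \<eta> (Suc t) \<omega> \<partial>M)
           \<le> exp (- (\<eta> * \<kappa>)) * (\<integral>\<omega>. lyapunov \<eta> t \<omega> \<partial>M) + exp (\<eta> * ratio_bound * lip * B) * mgf_Y"
proof -
  have int: "integrable M (\<lambda>\<omega>. lyapunov \<eta> (Suc t) \<omega> * of_bool (\<alpha> t * B \<le> D t \<omega>))"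
      "integrable M (\<lambda>\<omega>. lyapunov \<eta> (Suc t) \<omega> * of_bool (D t \<omega> < \<alpha> t * B))"
    using \<eta> by (auto intro!: integrable_lyapunov_mult)
  have "(\<integral>\<omega>. lyapunov \<eta> (Suc t) \<omega> \<partial>M)
      = (\<integral>\<omega>. lyapunov \<eta> (Suc t) \<omega> * of_bool (\<alpha> t * B \<le> D t \<omega>)
            + lyapunov \<eta> (Suc t) \<omega> * of_bool (D t \<omega> < \<alpha> t * B) \<partial>M)"
    by (intro Bochner_Integration.integral_cong) auto
  also have "\<dots> = (\<integral>\<omega>. lyapunov \<eta> (Suc t) \<omega> * of_bool (\<alpha> t * B \<le> D t \<omega>) \<partial>M)
      + (\<integral>\<omega>. lyapunov \<eta> (Suc t) \<omega> * of_bool (D t \<omega> < \<alpha> t * B) \<partial>M)"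
    using int by (rule Bochner_Integration.integral_add)
  finally show ?thesis
    using lyapunov_step_above[OF \<eta> small] lyapunov_step_below[OF \<eta>, of t] by linarith
qed

lemma quad_coeff_mgf_le:
  assumes \<eta>: "\<eta> > 0" and small: "\<eta> * gain\<^sup>2 * (32 / lam\<^sup>2) * mgf_Y \<le> \<kappa> / 2"
    and \<alpha>: "2 * ratio_bound * lip * (32 / lam\<^sup>2) * mgf_Y * \<alpha> t \<le> \<kappa> * scale"
  shows "quad_coeff \<eta> t * mgf_Y \<le> \<eta> * \<kappa> / 2"
proof -
  have "quad_coeff \<eta> t * mgf_Y = \<eta> / (2 * scale) * (ratio_bound * lip * (32 / lam\<^sup>2) * mgf_Y * \<alpha> t)
      + \<eta> / 2 * (\<eta> * gain\<^sup>2 * (32 / lam\<^sup>2) * mgf_Y)"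
    using scale_pos lam by (simp add: quad_coeff_def field_simps power2_eq_square)
  also have "\<dots> \<le> \<eta> / (2 * scale) * (\<kappa> * scale / 2) + \<eta> / 2 * (\<kappa> / 2)"
    using \<alpha> small \<eta> scale_pos by (intro add_mono mult_left_mono) auto
  also have "\<dots> = \<eta> * \<kappa> / 2"
    using scale_pos by (simp add: field_simps)
  finally show ?thesis .
qed

lemma integral_lyapunov_le_const:
  assumes "\<eta> \<ge> 0" "exp (\<eta> * lip * Fb / \<alpha> t) \<le> K"
  shows "(\<integral>\<omega>. lyapunov \<eta> t \<omega> \<partial>M) \<le> K"
  using lyapunov_le[of _ \<eta> t] assms
  by (intro M.integral_le_const integrable_lyapunov AE_I2) (auto intro: order_trans)

lemma lyapunov_integral_bounded:
  assumes \<eta>: "\<eta> > 0" "\<eta> * gain \<le> lam / 2" "\<eta> * gain\<^sup>2 * (32 / lam\<^sup>2) * mgf_Y \<le> \<kappa> / 2"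
  obtains Mb where "Mb > 0" "\<And>t. (\<integral>\<omega>. lyapunov \<eta> t \<omega> \<partial>M) \<le> Mb"
proof -
  define R where "R = 2 * ratio_bound * lip * (32 / lam\<^sup>2) * mgf_Y"
  define \<rho> C where "\<rho> = exp (- (\<eta> * \<kappa>))" and "C = exp (\<eta> * ratio_bound * lip * B) * mgf_Y"
  define Mb where "Mb = max (max (exp (\<eta> * lip * Fb / \<alpha> 0)) (exp (\<eta> * lip * Fb * (ratio_bound * R / (\<kappa> * scale)))))
                            (C / (1 - \<rho>))"
  have R: "R > 0" unfolding R_def using ratio_bound_ge_1 lip_ge_1 mgf_Y_ge_1 lam by simp
  have \<rho>: "0 < \<rho>" "\<rho> < 1" unfolding \<rho>_def using \<eta> \<kappa> by auto
  have "(\<integral>\<omega>. lyapunov \<eta> t \<omega> \<partial>M) \<le> Mb" for t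
  proof (induction t)
    case 0
    show ?case using \<eta> by (intro integral_lyapunov_le_const) (auto simp: Mb_def)
  next
    case (Suc t)
    show ?case
    proof (cases "R * \<alpha> t \<le> \<kappa> * scale")
      case True
      then have "quad_coeff \<eta> t * mgf_Y \<le> \<eta> * \<kappa> / 2"
        using \<eta> by (intro quad_coeff_mgf_le) (auto simp: R_def)
      then have "(\<integral>\<omega>. lyapunov \<eta> (Suc t) \<omega> \<partial>M) \<le> \<rho> * Mb + C"
        using lyapunov_step[OF \<eta>(1,2)] Suc \<rho> unfolding \<rho>_def C_def
        by (smt (verit) mult_left_mono)
      also have "\<dots> \<le> Mb"
      proof -
        have "C / (1 - \<rho>) \<le> Mb" unfolding Mb_def by simp
        then have "C \<le> Mb * (1 - \<rho>)" using \<rho> by (simp add: divide_le_eq)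
        then show ?thesis by (simp add: algebra_simps)
      qed
      finally show ?thesis .
    next
      case False
      have "\<alpha> t \<le> ratio_bound * \<alpha> (Suc t)"
        using alpha_step_bounds(2)[of t] alpha_pos[of "Suc t"] by (simp add: ratio_bound_def divide_le_eq)
      then have "\<kappa> * scale \<le> R * ratio_bound * \<alpha> (Suc t)"
        using False R by (smt (verit) mult_left_mono mult.assoc)
      then have "1 / \<alpha> (Suc t) \<le> ratio_bound * R / (\<kappa> * scale)"
        using alpha_pos[of "Suc t"] scale_pos \<kappa> by (simp add: field_simps)
      then have "\<eta> * lip * Fb * (1 / \<alpha> (Suc t)) \<le> \<eta> * lip * Fb * (ratio_bound * R / (\<kappa> * scale))"
        using \<eta> lip_ge_1 Fb by (intro mult_left_mono) auto
      then have "exp (\<eta> * lip * Fb / \<alpha> (Suc t)) \<le> exp (\<eta> * lip * Fb * (ratio_bound * R / (\<kappa> * scale)))"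
        by simp
      also have "\<dots> \<le> Mb" unfolding Mb_def by simp
      finally show ?thesis
        using \<eta> by (intro integral_lyapunov_le_const) auto
    qed
  qed
  moreover have "Mb > 0" unfolding Mb_def by (simp add: max.strict_coboundedI1)
  ultimately show thesis using that by blast
qed

lemma exp_scaled_D_le_lyapunov:
  assumes "\<omega> \<in> space M" "\<eta> \<ge> 0"
  shows "exp (\<eta> * D (Suc t) \<omega> / \<alpha> t) \<le> lyapunov \<eta> (Suc t) \<omega>"
proof -
  have "\<alpha> (Suc t) \<le> \<alpha> t"
    using alpha_step_bounds(1)[of t] alpha_pos[of "Suc t"] by (simp add: le_divide_eq)
  then have "\<eta> * D (Suc t) \<omega> / \<alpha> t \<le> \<eta> * D (Suc t) \<omega> / \<alpha> (Suc t)"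
    using assms D_nonneg alpha_pos by (intro divide_left_mono) auto
  also have "\<dots> \<le> \<eta> * exp_potential scale (D (Suc t) \<omega>) / \<alpha> (Suc t)"
    using assms exp_potential_ge[OF scale_pos] alpha_pos[of "Suc t"]
    by (intro divide_right_mono mult_left_mono) auto
  finally show ?thesis by (simp add: lyapunov_def)
qed

lemma tail_le_lyapunov:
  assumes "\<eta> > 0"
  shows "measure M {\<omega> \<in> space M. z \<le> D (Suc t) \<omega>}
           \<le> (\<integral>\<omega>. lyapunov \<eta> (Suc t) \<omega> \<partial>M) * exp (- (\<eta> / \<alpha> t) * z)"
proof -
  have "{\<omega> \<in> space M. z \<le> D (Suc t) \<omega>} \<subseteq> {\<omega> \<in> space M. exp (\<eta> * z / \<alpha> t) \<le> lyapunov \<eta> (Suc t) \<omega>}"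
  proof safe
    fix \<omega> assume \<omega>: "\<omega> \<in> space M" and "z \<le> D (Suc t) \<omega>"
    then have "\<eta> * z / \<alpha> t \<le> \<eta> * D (Suc t) \<omega> / \<alpha> t"
      using assms alpha_pos[of t] by (intro divide_right_mono mult_left_mono) auto
    then show "exp (\<eta> * z / \<alpha> t) \<le> lyapunov \<eta> (Suc t) \<omega>"
      using exp_scaled_D_le_lyapunov[OF \<omega>, of \<eta> t] assms by (meson exp_le_cancel_iff less_imp_le order_trans)
  qed
  then have "measure M {\<omega> \<in> space M. z \<le> D (Suc t) \<omega>}
      \<le> measure M {\<omega> \<in> space M. exp (\<eta> * z / \<alpha> t) \<le> lyapunov \<eta> (Suc t) \<omega>}"
    by (intro M.finite_measure_mono) measurable
  also have "\<dots> \<le> (\<integral>\<omega>. lyapunov \<eta> (Suc t) \<omega> \<partial>M) / exp (\<eta> * z / \<alpha> t)"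
    using assms by (intro integral_Markov_inequality_measure[where A="space M"] integrable_lyapunov)
      (auto intro!: AE_I2 less_imp_le)
  finally show ?thesis by (simp add: exp_minus field_simps)
qed

lemma mean_le_lyapunov:
  assumes "\<eta> > 0"
  shows "(\<integral>\<omega>. D (Suc t) \<omega> \<partial>M) \<le> \<alpha> t / \<eta> * (\<integral>\<omega>. lyapunov \<eta> (Suc t) \<omega> \<partial>M)"
proof -
  have "(\<integral>\<omega>. D (Suc t) \<omega> \<partial>M) \<le> (\<integral>\<omega>. \<alpha> t / \<eta> * lyapunov \<eta> (Suc t) \<omega> \<partial>M)"
  proof (rule integral_mono)
    show "integrable M (D (Suc t))"
      using D_nonneg D_le by (intro M.integrable_bounded_on_space[where K=Fb]) auto
    fix \<omega> assume \<omega>: "\<omega> \<in> space M"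
    have "\<eta> * D (Suc t) \<omega> / \<alpha> t \<le> lyapunov \<eta> (Suc t) \<omega>"
      using exp_scaled_D_le_lyapunov[OF \<omega>] exp_ge_add_one_self[of "\<eta> * D (Suc t) \<omega> / \<alpha> t"] assms
      by (smt (verit))
    then show "D (Suc t) \<omega> \<le> \<alpha> t / \<eta> * lyapunov \<eta> (Suc t) \<omega>"
      using assms alpha_pos[of t] by (simp add: field_simps)
  qed (use integrable_lyapunov assms in auto)
  then show ?thesis by simp
qed

lemma drift_concentration:
  "\<exists>I J K. I > 0 \<and> J > 0 \<and> K > 0 \<and>
    (\<forall>t. \<forall>z\<ge>0. measure M {\<omega> \<in> space M. z \<le> D (Suc t) \<omega>} \<le> I * exp (- (J / \<alpha> t) * z)
       \<and> (\<integral>\<omega>. D (Suc t) \<omega> \<partial>M) \<le> K * \<alpha> t)"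
proof -
  define P where "P = gain\<^sup>2 * (32 / lam\<^sup>2) * mgf_Y"
  define \<eta> where "\<eta> = min (lam / (2 * gain)) (\<kappa> / (2 * P))"
  have P: "P > 0" unfolding P_def using gain_pos lam mgf_Y_ge_1 by simp
  have "\<eta> > 0" unfolding \<eta>_def using gain_pos lam \<kappa> P by simp
  moreover have "\<eta> * gain \<le> lam / (2 * gain) * gain"
    unfolding \<eta>_def using gain_pos by (intro mult_right_mono) auto
  moreover have "\<eta> * P \<le> \<kappa> / (2 * P) * P"
    unfolding \<eta>_def using P by (intro mult_right_mono) auto
  ultimately have "\<eta> > 0" "\<eta> * gain \<le> lam / 2" "\<eta> * P \<le> \<kappa> / 2"
    using gain_pos P by simp_all
  then have \<eta>: "\<eta> > 0" "\<eta> * gain \<le> lam / 2" "\<eta> * gain\<^sup>2 * (32 / lam\<^sup>2) * mgf_Y \<le> \<kappa> / 2"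
    unfolding P_def by (simp_all only: mult.assoc)
  obtain Mb where Mb: "Mb > 0" "\<And>t. (\<integral>\<omega>. lyapunov \<eta> t \<omega> \<partial>M) \<le> Mb"
    using lyapunov_integral_bounded[OF \<eta>] by blast
  have "measure M {\<omega> \<in> space M. z \<le> D (Suc t) \<omega>} \<le> Mb * exp (- (\<eta> / \<alpha> t) * z)" for t z
    using tail_le_lyapunov[OF \<eta>(1), of z t] Mb(2)[of "Suc t"] by (smt (verit) exp_gt_zero mult_right_mono)
  moreover have "(\<integral>\<omega>. D (Suc t) \<omega> \<partial>M) \<le> Mb / \<eta> * \<alpha> t" for t
    using mean_le_lyapunov[OF \<eta>(1), of t] Mb(2)[of "Suc t"] \<eta>(1) alpha_pos[of t]
    by (smt (verit) divide_nonneg_pos mult_left_mono times_divide_eq_left mult.commute)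
  ultimately show ?thesis
    using Mb(1) \<eta>(1) by (intro exI[of _ Mb] exI[of _ \<eta>] exI[of _ "Mb / \<eta>"]) auto
qed

end

theorem theorem1:
  fixes M :: "'w measure" and Fl :: "nat \<Rightarrow> 'w measure"
    and X :: "'e::euclidean_space set" and f :: "'e \<Rightarrow> real" and xstar :: 'e
    and x :: "nat \<Rightarrow> 'w \<Rightarrow> 'e" and \<alpha> :: "nat \<Rightarrow> real"
    and a u \<gamma> \<kappa> B lam :: real
    and N :: "'v measure" and Y :: "'v \<Rightarrow> real"
  assumes M: "prob_space M"
    and X: "X \<noteq> {}" "closed X" "bounded X" "convex X"
    and f_cont: "continuous_on X f"
    and xstar: "xstar \<in> X" "\<forall>y\<in>X. f xstar \<le> f y"
    and filt_sub: "\<forall>t. subalgebra M (Fl t)"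
    and filt_mono: "\<forall>s t. s \<le> t \<longrightarrow> sets (Fl s) \<subseteq> sets (Fl t)"
    and adapted: "\<forall>t. x t \<in> borel_measurable (Fl t)"
    and in_X: "\<forall>t. \<forall>\<omega>\<in>space M. x t \<omega> \<in> X"
    and step: "a > 0" "u > 0" "0 \<le> \<gamma>" "\<gamma> \<le> 1"
      "\<forall>t. \<alpha> t = a / (u + real t) powr \<gamma>"
    and C1: "\<kappa> > 0" "B > 0"
      "\<forall>t. AE \<omega> in M. f (x t \<omega>) - f xstar \<ge> \<alpha> t * B \<longrightarrow>
          real_cond_exp M (Fl t) (\<lambda>\<omega>. f (x (Suc t) \<omega>) - f (x t \<omega>)) \<omega> \<le> - 2 * \<alpha> t * \<kappa>"
    and C2: "lam > 0" "prob_space N" "Y \<in> borel_measurable N"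
      "\<forall>\<omega>\<in>space N. Y \<omega> \<ge> 0"
      "(\<integral>\<^sup>+ \<omega>. ennreal (exp (lam * Y \<omega>)) \<partial>N) < \<infinity>"
      "\<forall>t. \<forall>y\<ge>0. AE \<omega> in M.
          real_cond_exp M (Fl t)
            (indicator {\<omega>' \<in> space M. \<bar>f (x (Suc t) \<omega>') - f (x t \<omega>')\<bar> \<ge> \<alpha> t * y}) \<omega>
          \<le> measure N {\<omega>' \<in> space N. Y \<omega>' \<ge> y}"
  shows "\<exists>I J K. I > 0 \<and> J > 0 \<and> K > 0 \<and>
    (\<forall>t. \<forall>z\<ge>0.
       measure M {\<omega> \<in> space M. f (x (Suc t) \<omega>) - f xstar \<ge> z} \<le> I * exp (- (J / \<alpha> t) * z)
     \<and> (\<integral>\<omega>. (f (x (Suc t) \<omega>) - f xstar) \<partial>M) \<le> K * \<alpha> t)"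
proof -
  have "compact X" using X(2,3) by (simp add: compact_eq_bounded_closed)
  then have "bounded (f ` X)" by (intro compact_imp_bounded compact_continuous_image f_cont)
  then obtain Fb where Fb: "\<And>y. y \<in> X \<Longrightarrow> \<bar>f y\<bar> \<le> Fb"
    unfolding bounded_real by blast
  define D where "D t \<omega> = f (x t \<omega>) - f xstar" for t \<omega>
  have "space (Fl t) = space M" for t
    using filt_sub by (simp add: subalgebra_def)
  then have D_meas: "D t \<in> borel_measurable (Fl t)" for t
    unfolding D_def using adapted in_X xstar(1)
    by (intro borel_measurable_diff borel_measurable_comp_continuous_on[OF f_cont]) auto
  have D_bounds: "0 \<le> D t \<omega> \<and> D t \<omega> \<le> 2 * Fb + 1" if "\<omega> \<in> space M" for t \<omega>
    using Fb[OF xstar(1)] Fb in_X that xstar unfolding D_def by (smt (verit))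
  interpret drift_setting M Fl D \<alpha> a u \<gamma> \<kappa> B lam "2 * Fb + 1" N Y
    by (rule drift_setting.intro)
      (use M filt_sub step C1 C2 Fb[OF xstar(1)] D_meas D_bounds in \<open>simp_all add: D_def\<close>)
  show ?thesis
    using drift_concentration unfolding D_def by simp
qed

end
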